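(* Let $\mathcal T$ be a triangulation of a surface $S$ of topological type $(g,n)$ and let $\Theta:E\to[0,\pi)$ satisfy $\mathbf{(C1)}$. In Euclidean background geometry, with the change of variables $u_i=\ln r_i$, the Jacobian matrix $(\partial K_i/\partial u_j)$ of the curvature map $u\mapsto(K_1,\dots,K_{|V|})$ on $\mathbb R^{|V|}$ is symmetric and positive semi-definite; moreover, restricted to the hyperplane $\Xi_d=\{u\in\mathbb R^{|V|}:\sum_{i}u_i=d\}$ (for any $d\in\mathbb R$) it is positive definite, i.e. $x^{T}(\partial K_i/\partial u_j)x>0$ for all non-zero $x$ with $\sum_i x_i=0$.
   Context: $S$: compact oriented surface of genus $g$ with $n\ge0$ boundary circles. $\mathcal T$: vertices $V=\{v_1,\dots,v_{|V|}\}$, edges $E$, boundary vertices $V_\partial$. $\mathbf{(C1)}$: whenever $e_1,e_2,e_3$ bound a triangle, $I(e_1)+I(e_2)I(e_3)\ge0$ and cyclic analogues, $I=\cos\Theta$. For $r\in\mathbb R_+^{|V|}$, each triangle $v_iv_jv_k$ is realized as the Euclidean triangle with sides $l_{ij}=\sqrt{r_i^2+r_j^2+2r_ir_j\cos\Theta([v_i,v_j])}$ etc., glued into a Euclidean cone metric; $\sigma(v_i)$ is the total angle at $v_i$; $K_i=2\pi-\sigma(v_i)$ for interior and $\pi-\sigma(v_i)$ for boundary vertices. *)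

theory Defs
  imports "HOL-Analysis.Analysis"
begin

text \<open>Faces are elements of a finite
set F of some type 'f; each face f has three corners 0,1,2 with vertices
vert f c and three sides; side c of f joins corner c and corner (c+1) mod 3
and carries the edge label edge f c.  Vertices are all elements of the finite
type 'v (so V = UNIV and |V| = CARD('v)).\<close>

definition nxt :: "nat \<Rightarrow> nat" where
  "nxt c = Suc c mod 3"

definition sides :: "'f set \<Rightarrow> ('f \<Rightarrow> nat \<Rightarrow> 'e) \<Rightarrow> 'e \<Rightarrow> ('f \<times> nat) set" where
  "sides F edge e = {(f, c). f \<in> F \<and> c < 3 \<and> edge f c = e}"

definition edge_set :: "'f set \<Rightarrow> ('f \<Rightarrow> nat \<Rightarrow> 'e) \<Rightarrow> 'e set" where
  "edge_set F edge = {edge f c | f c. f \<in> F \<and> c < 3}"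

definition face_adj :: "'f set \<Rightarrow> ('f \<Rightarrow> nat \<Rightarrow> 'e) \<Rightarrow> ('f \<times> 'f) set" where
  "face_adj F edge = {(f, g). f \<in> F \<and> g \<in> F \<and> (\<exists>c<3. \<exists>d<3. edge f c = edge g d)}"

text \<open>Corners at vertex v; two corners at v are adjacent in the link of v if
a side incident to the first corner and a side incident to the second corner
are the same edge (corner c is incident to sides c and (c+2) mod 3).\<close>
definition corners_at :: "'f set \<Rightarrow> ('f \<Rightarrow> nat \<Rightarrow> 'v) \<Rightarrow> 'v \<Rightarrow> ('f \<times> nat) set" where
  "corners_at F vert v = {(f, c). f \<in> F \<and> c < 3 \<and> vert f c = v}"

definition link_adj :: "'f set \<Rightarrow> ('f \<Rightarrow> nat \<Rightarrow> 'v) \<Rightarrow> ('f \<Rightarrow> nat \<Rightarrow> 'e) \<Rightarrow> 'v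
    \<Rightarrow> (('f \<times> nat) \<times> ('f \<times> nat)) set" where
  "link_adj F vert edge v =
     {((f, c), (g, d)). (f, c) \<in> corners_at F vert v \<and> (g, d) \<in> corners_at F vert v \<and>
        (\<exists>s\<in>{c, nxt (nxt c)}. \<exists>t\<in>{d, nxt (nxt d)}. (f, s) \<noteq> (g, t) \<and> edge f s = edge g t)}"

text \<open>A (combinatorial) triangulation of a compact connected oriented surface
with possibly nonempty boundary: every vertex lies on a face, every edge is a
side of exactly one (boundary edge) or two (interior edge) face sides, the two
sides of an interior edge are glued orientation-reversingly (coherent
orientation), the surface is connected, and the link of every vertex is
connected (a circle or an arc).\<close>
definition triangulation ::
  "'f set \<Rightarrow> ('f \<Rightarrow> nat \<Rightarrow> 'v) \<Rightarrow> ('f \<Rightarrow> nat \<Rightarrow> 'e) \<Rightarrow> bool" where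
  "triangulation F vert edge \<longleftrightarrow>
     finite F \<and> F \<noteq> {} \<and>
     (\<forall>v. \<exists>f\<in>F. \<exists>c<3. vert f c = v) \<and>
     (\<forall>e\<in>edge_set F edge. card (sides F edge e) = 1 \<or> card (sides F edge e) = 2) \<and>
     (\<forall>f\<in>F. \<forall>g\<in>F. \<forall>c<3. \<forall>d<3. edge f c = edge g d \<and> (f, c) \<noteq> (g, d) \<longrightarrow>
         vert f c = vert g (nxt d) \<and> vert f (nxt c) = vert g d) \<and>
     (\<forall>f\<in>F. \<forall>g\<in>F. (f, g) \<in> (face_adj F edge)\<^sup>*) \<and>
     (\<forall>v. \<forall>p\<in>corners_at F vert v. \<forall>q\<in>corners_at F vert v. (p, q) \<in> (link_adj F vert edge v)\<^sup>*)"

definition boundary_vertex ::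
  "'f set \<Rightarrow> ('f \<Rightarrow> nat \<Rightarrow> 'v) \<Rightarrow> ('f \<Rightarrow> nat \<Rightarrow> 'e) \<Rightarrow> 'v \<Rightarrow> bool" where
  "boundary_vertex F vert edge v \<longleftrightarrow>
     (\<exists>f\<in>F. \<exists>c<3. (vert f c = v \<or> vert f (nxt c) = v) \<and> card (sides F edge (edge f c)) = 1)"

text \<open>Condition (C1), with I = cos \<Theta>.\<close>
definition C1 :: "'f set \<Rightarrow> ('f \<Rightarrow> nat \<Rightarrow> 'e) \<Rightarrow> ('e \<Rightarrow> real) \<Rightarrow> bool" where
  "C1 F edge \<Theta> \<longleftrightarrow>
     (\<forall>f\<in>F. \<forall>c<3. cos (\<Theta> (edge f c)) + cos (\<Theta> (edge f (nxt c))) * cos (\<Theta> (edge f (nxt (nxt c)))) \<ge> 0)"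

definition edge_len :: "('e \<Rightarrow> real) \<Rightarrow> ('v \<Rightarrow> real) \<Rightarrow> 'v \<Rightarrow> 'v \<Rightarrow> 'e \<Rightarrow> real" where
  "edge_len \<Theta> r a b e = sqrt ((r a)\<^sup>2 + (r b)\<^sup>2 + 2 * r a * r b * cos (\<Theta> e))"

definition side_len ::
  "('f \<Rightarrow> nat \<Rightarrow> 'v) \<Rightarrow> ('f \<Rightarrow> nat \<Rightarrow> 'e) \<Rightarrow> ('e \<Rightarrow> real) \<Rightarrow> ('v \<Rightarrow> real) \<Rightarrow> 'f \<Rightarrow> nat \<Rightarrow> real" where
  "side_len vert edge \<Theta> r f c = edge_len \<Theta> r (vert f c) (vert f (nxt c)) (edge f c)"

text \<open>Euclidean inner angle at corner c of face f (law of cosines); the side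
opposite corner c is side (c+1) mod 3.\<close>
definition corner_angle ::
  "('f \<Rightarrow> nat \<Rightarrow> 'v) \<Rightarrow> ('f \<Rightarrow> nat \<Rightarrow> 'e) \<Rightarrow> ('e \<Rightarrow> real) \<Rightarrow> ('v \<Rightarrow> real) \<Rightarrow> 'f \<Rightarrow> nat \<Rightarrow> real" where
  "corner_angle vert edge \<Theta> r f c =
     (let la = side_len vert edge \<Theta> r f c;
          lb = side_len vert edge \<Theta> r f (nxt (nxt c));
          lo = side_len vert edge \<Theta> r f (nxt c)
      in arccos ((la\<^sup>2 + lb\<^sup>2 - lo\<^sup>2) / (2 * la * lb)))"

definition cone_angle ::
  "'f set \<Rightarrow> ('f \<Rightarrow> nat \<Rightarrow> 'v) \<Rightarrow> ('f \<Rightarrow> nat \<Rightarrow> 'e) \<Rightarrow> ('e \<Rightarrow> real) \<Rightarrow> ('v \<Rightarrow> real) \<Rightarrow> 'v \<Rightarrow> real" where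
  "cone_angle F vert edge \<Theta> r v =
     (\<Sum>(f, c)\<in>corners_at F vert v. corner_angle vert edge \<Theta> r f c)"

definition curvature ::
  "'f set \<Rightarrow> ('f \<Rightarrow> nat \<Rightarrow> 'v) \<Rightarrow> ('f \<Rightarrow> nat \<Rightarrow> 'e) \<Rightarrow> ('e \<Rightarrow> real) \<Rightarrow> ('v \<Rightarrow> real) \<Rightarrow> 'v \<Rightarrow> real" where
  "curvature F vert edge \<Theta> r v =
     (if boundary_vertex F vert edge v then pi else 2 * pi) - cone_angle F vert edge \<Theta> r v"

definition curv_map ::
  "'f set \<Rightarrow> ('f \<Rightarrow> nat \<Rightarrow> 'v::finite) \<Rightarrow> ('f \<Rightarrow> nat \<Rightarrow> 'e) \<Rightarrow> ('e \<Rightarrow> real) \<Rightarrow> real^'v \<Rightarrow> real^'v" where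
  "curv_map F vert edge \<Theta> u = (\<chi> v. curvature F vert edge \<Theta> (\<lambda>w. exp (u $ w)) v)"

end

theory Submission
  imports Defs
begin

(* In the coordinates u_i = ln r_i, the inner angle theta_i of a face ijk satisfies
   d theta_i / d u_j = d theta_j / d u_i = w_ij >= 0 for an explicit weight w_ij, and
   d theta_i / d u_i = - (w_ij + w_ik) since angles are invariant under scaling all radii.
   Summing over corners, x . (DK x) = sum over faces and sides ij of w_ij (x_i - x_j)^2: the
   Jacobian of the curvature map is a weighted graph Laplacian, hence symmetric and positive
   semi-definite. Under (C1) a weight w_ij vanishes only if I_ij = 1 and I_ik + I_jk = 0, and two
   such sides in one face would force the third cosine to be -1. So every face has two sides of
   positive weight, and the form vanishes only on vectors that are constant on each face, hence,
   the surface being connected, only on constant vectors, which sum_i x_i = 0 excludes. *)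

lemma one_minus_square_nonneg:
  fixes c :: real
  assumes "-1 \<le> c" "c \<le> 1"
  shows "0 \<le> 1 - c\<^sup>2"
  using assms abs_square_le_1[of c] by auto

lemma one_minus_square_pos:
  fixes c :: real
  assumes "-1 < c" "c < 1"
  shows "0 < 1 - c\<^sup>2"
  using assms abs_square_less_1[of c] by auto

lemma one_plus_mult_pos:
  fixes a b :: real
  assumes "-1 < a" "a \<le> 1" "-1 < b" "b \<le> 1"
  shows "0 < 1 + a*b"
proof -
  have "0 < (1+a)*(1+b)" "0 \<le> (1-a)*(1-b)"
    using assms by simp_all
  moreover have "(1+a)*(1+b) + (1-a)*(1-b) = 2*(1 + a*b)"
    by algebra
  ultimately have "0 < 2*(1 + a*b)"
    by linarith
  then show ?thesis by simp
qed

definition len_sq :: "real \<Rightarrow> real \<Rightarrow> real \<Rightarrow> real" where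
  "len_sq x y c = x\<^sup>2 + y\<^sup>2 + 2*x*y*c"

definition four_area_sq :: "real \<Rightarrow> real \<Rightarrow> real \<Rightarrow> real \<Rightarrow> real \<Rightarrow> real \<Rightarrow> real" where
  "four_area_sq x y z a b c = x\<^sup>2*y\<^sup>2*(1-c\<^sup>2) + x\<^sup>2*z\<^sup>2*(1-b\<^sup>2) + y\<^sup>2*z\<^sup>2*(1-a\<^sup>2)
     + 2*x*y*z*(x*(a+b*c) + y*(b+a*c) + z*(c+a*b))"

(* The angle at the vertex of radius x in the triangle with vertex radii x, y, z, where a, b, c
   are the cosines I of the edges opposite x, y, z. *)
definition tri_angle :: "real \<Rightarrow> real \<Rightarrow> real \<Rightarrow> real \<Rightarrow> real \<Rightarrow> real \<Rightarrow> real" where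
  "tri_angle x y z a b c =
     arccos ((len_sq x y c + len_sq x z b - len_sq y z a) / (2 * sqrt (len_sq x y c) * sqrt (len_sq x z b)))"

(* The partial derivative of tri_angle x y z a b c with respect to ln y. *)
definition angle_weight :: "real \<Rightarrow> real \<Rightarrow> real \<Rightarrow> real \<Rightarrow> real \<Rightarrow> real \<Rightarrow> real" where
  "angle_weight x y z a b c =
     x*y*(x*y*(1-c\<^sup>2) + z*(x*(a+b*c) + y*(b+a*c))) / (len_sq x y c * sqrt (four_area_sq x y z a b c))"

(* The cosines I of the three edges of a face, given (C1) and 0 <= Theta < pi. *)
definition admissible_cosines :: "real \<Rightarrow> real \<Rightarrow> real \<Rightarrow> bool" where
  "admissible_cosines a b c \<longleftrightarrow>
     -1 < a \<and> a \<le> 1 \<and> -1 < b \<and> b \<le> 1 \<and> -1 < c \<and> c \<le> 1 \<and>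
     0 \<le> a + b*c \<and> 0 \<le> b + a*c \<and> 0 \<le> c + a*b"

lemma len_sq_commute: "len_sq y x c = len_sq x y c"
  unfolding len_sq_def by algebra

lemma four_area_sq_swap: "four_area_sq x z y a c b = four_area_sq x y z a b c"
  unfolding four_area_sq_def by algebra

lemma four_area_sq_eq:
  "4 * len_sq x y c * len_sq x z b - (len_sq x y c + len_sq x z b - len_sq y z a)\<^sup>2 =
   4 * four_area_sq x y z a b c"
  unfolding len_sq_def four_area_sq_def by algebra

lemma angle_weight_swap: "angle_weight y x z b a c = angle_weight x y z a b c"
proof -
  have "four_area_sq y x z b a c = four_area_sq x y z a b c"
    unfolding four_area_sq_def by algebra
  moreover have "y*x*(y*x*(1-c\<^sup>2) + z*(y*(b+a*c) + x*(a+b*c))) =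
                 x*y*(x*y*(1-c\<^sup>2) + z*(x*(a+b*c) + y*(b+a*c)))"
    by algebra
  ultimately show ?thesis
    unfolding angle_weight_def len_sq_commute[of y x] by simp
qed

lemma len_sq_nonneg:
  assumes "\<bar>c\<bar> \<le> 1"
  shows "0 \<le> len_sq x y c"
proof -
  have "len_sq x y c = (x + y*c)\<^sup>2 + y\<^sup>2*(1 - c\<^sup>2)"
    unfolding len_sq_def by algebra
  moreover have "c\<^sup>2 \<le> 1"
    using assms by (simp add: abs_square_le_1)
  ultimately show ?thesis by simp
qed

lemma len_sq_pos:
  assumes "0 < x" "0 < y" "-1 < c"
  shows "0 < len_sq x y c"
proof -
  have "len_sq x y c = (x - y)\<^sup>2 + 2*x*y*(1 + c)"
    unfolding len_sq_def by algebra
  moreover have "0 < 2*x*y*(1 + c)"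
    using assms by simp
  ultimately show ?thesis
    by (metis add_nonneg_pos zero_le_power2)
qed

lemma four_area_sq_pos:
  assumes "0 < x" "0 < y" "0 < z" and adm: "admissible_cosines a b c"
  shows "0 < four_area_sq x y z a b c"
proof -
  have sq: "0 \<le> 1 - a\<^sup>2" "0 \<le> 1 - b\<^sup>2" "0 \<le> 1 - c\<^sup>2"
    using adm one_minus_square_nonneg unfolding admissible_cosines_def by simp_all
  have lin: "0 \<le> x*(a+b*c)" "0 \<le> y*(b+a*c)" "0 \<le> z*(c+a*b)"
    using assms unfolding admissible_cosines_def by simp_all
  consider "c < 1" | "c = 1"
    using adm unfolding admissible_cosines_def by linarith
  then show ?thesis
  proof cases
    case 1
    then have "0 < 1 - c\<^sup>2"
      using adm one_minus_square_pos unfolding admissible_cosines_def by simp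
    then show ?thesis
      using assms sq lin unfolding four_area_sq_def
      by (simp add: add_pos_nonneg)
  next
    case 2
    have "0 < z*(c+a*b)"
      using 2 assms one_plus_mult_pos[of a b] unfolding admissible_cosines_def by simp
    then have "0 < 2*x*y*z*(x*(a+b*c) + y*(b+a*c) + z*(c+a*b))"
      using assms lin by simp
    then show ?thesis
      using assms sq unfolding four_area_sq_def
      by (simp add: add_nonneg_pos)
  qed
qed

lemma angle_weight_nonneg:
  assumes "0 < x" "0 < y" "0 < z" and adm: "admissible_cosines a b c"
  shows "0 \<le> angle_weight x y z a b c"
proof -
  have "0 < len_sq x y c * sqrt (four_area_sq x y z a b c)"
    using assms four_area_sq_pos len_sq_pos unfolding admissible_cosines_def by simp
  moreover have "0 \<le> 1 - c\<^sup>2"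
    using adm one_minus_square_nonneg unfolding admissible_cosines_def by simp
  ultimately show ?thesis
    using assms unfolding angle_weight_def admissible_cosines_def by simp
qed

lemma angle_weight_pos:
  assumes "0 < x" "0 < y" "0 < z" and adm: "admissible_cosines a b c"
    and nondegenerate: "c < 1 \<or> 0 < a + b*c"
  shows "0 < angle_weight x y z a b c"
proof -
  have "0 \<le> x*y*(1-c\<^sup>2)" "0 \<le> z*(x*(a+b*c))" "0 \<le> z*(y*(b+a*c))"
    using assms one_minus_square_nonneg unfolding admissible_cosines_def by simp_all
  moreover have "0 < x*y*(1-c\<^sup>2) \<or> 0 < z*(x*(a+b*c))"
    using assms one_minus_square_pos unfolding admissible_cosines_def by auto
  ultimately have "0 < x*y*(1-c\<^sup>2) + (z*(x*(a+b*c)) + z*(y*(b+a*c)))"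
    by linarith
  then have "0 < x*y*(x*y*(1-c\<^sup>2) + z*(x*(a+b*c) + y*(b+a*c)))"
    using assms by (intro mult_pos_pos) (simp_all add: distrib_left)
  moreover have "0 < len_sq x y c * sqrt (four_area_sq x y z a b c)"
    using assms four_area_sq_pos len_sq_pos unfolding admissible_cosines_def by simp
  ultimately show ?thesis
    unfolding angle_weight_def by simp
qed

lemma has_derivative_arccos_law_of_cosines:
  fixes A B C :: "'a::real_normed_vector \<Rightarrow> real"
  assumes dA: "(A has_derivative dA) (at u)" and dB: "(B has_derivative dB) (at u)"
    and dC: "(C has_derivative dC) (at u)"
    and pos: "0 < A u" "0 < B u" and disc: "0 < 4*A u*B u - (A u + B u - C u)\<^sup>2"
  shows "((\<lambda>w. arccos ((A w + B w - C w) / (2 * sqrt (A w) * sqrt (B w)))) has_derivative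
     (\<lambda>h. - (dA h + dB h - dC h - (A u + B u - C u)/2 * (dA h/A u + dB h/B u))
            / sqrt (4*A u*B u - (A u + B u - C u)\<^sup>2))) (at u)"
proof -
  define N where "N = A u + B u - C u"
  define sa where "sa = sqrt (A u)"
  define sb where "sb = sqrt (B u)"
  have sa: "0 < sa" "A u = sa\<^sup>2" and sb: "0 < sb" "B u = sb\<^sup>2"
    using pos unfolding sa_def sb_def by simp_all
  define D where "D = 2 * sqrt (A u) * sqrt (B u)"
  have D: "0 < D" "D\<^sup>2 = 4 * A u * B u"
    using pos unfolding D_def by (simp_all add: power_mult_distrib)
  have cos_sq: "1 - (N/D)\<^sup>2 = (4 * A u * B u - N\<^sup>2) / D\<^sup>2"
    using D pos by (simp add: field_simps)
  moreover have "0 < (4 * A u * B u - N\<^sup>2) / D\<^sup>2"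
    using disc D(1) unfolding N_def by (intro divide_pos_pos) simp_all
  ultimately have "(N/D)\<^sup>2 < 1"
    by linarith
  then have cos_bounds: "-1 < N/D" "N/D < 1"
    unfolding abs_square_less_1 by linarith+
  have sin_pos: "0 < sqrt (4 * A u * B u - N\<^sup>2)"
    using disc unfolding N_def by simp
  have sin_eq: "sqrt (1 - (N/D)\<^sup>2) = sqrt (4 * A u * B u - N\<^sup>2) / D"
    using D(1) unfolding cos_sq by (simp add: real_sqrt_divide)
  note sqrtA = has_derivative_real_sqrt[OF pos(1) dA]
  note sqrtB = has_derivative_real_sqrt[OF pos(2) dB]
  have denom: "((\<lambda>w. 2 * sqrt (A w) * sqrt (B w)) has_derivative
      (\<lambda>h. D/2 * (dA h / A u + dB h / B u))) (at u)"
    by (rule has_derivative_eq_rhs[OF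
          has_derivative_mult[OF has_derivative_mult[OF has_derivative_const sqrtA] sqrtB]])
      (unfold D_def sa_def[symmetric] sb_def[symmetric] sa(2) sb(2),
       use sa sb in \<open>simp add: fun_eq_iff field_simps power2_eq_square\<close>)
  have ratio: "((\<lambda>w. (A w + B w - C w) / (2 * sqrt (A w) * sqrt (B w))) has_derivative
      (\<lambda>h. (dA h + dB h - dC h - N/2 * (dA h / A u + dB h / B u)) / D)) (at u)"
    by (rule has_derivative_eq_rhs[OF
          has_derivative_divide'[OF has_derivative_diff[OF has_derivative_add[OF dA dB] dC] denom]])
      (fold D_def N_def, use D(1) pos in \<open>auto simp: fun_eq_iff field_simps\<close>)
  show ?thesis
    by (rule has_derivative_eq_rhs[OF has_derivative_arccos[OF cos_bounds[unfolded N_def D_def] ratio]])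
      (fold D_def N_def, unfold sin_eq,
       use D(1) pos sin_pos in \<open>auto simp: fun_eq_iff field_simps\<close>)
qed

lemma has_derivative_vec_lambda:
  fixes f :: "'a::real_normed_vector \<Rightarrow> 'n::finite \<Rightarrow> real"
  assumes "\<And>i. ((\<lambda>x. f x i) has_derivative (\<lambda>h. f' h i)) (at x within S)"
  shows "((\<lambda>x. \<chi> i. f x i) has_derivative (\<lambda>h. \<chi> i. f' h i)) (at x within S)"
  by (subst has_derivative_componentwise_within) (use assms in \<open>auto simp: Basis_vec_def inner_axis\<close>)

lemma has_derivative_exp_nth:
  fixes u :: "real^'n"
  shows "((\<lambda>w. exp (w $ i)) has_derivative (\<lambda>h. h $ i * exp (u $ i))) (at u)"
  using DERIV_compose_FDERIV[OF DERIV_exp bounded_linear_imp_has_derivative[OF bounded_linear_vec_nth]] .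

lemma has_derivative_len_sq_exp:
  fixes u :: "real^'n"
  shows "((\<lambda>w. len_sq (exp (w$i)) (exp (w$j)) c) has_derivative
     (\<lambda>h. 2 * exp (u$i) * (exp (u$i) + exp (u$j) * c) * h$i
          + 2 * exp (u$j) * (exp (u$j) + exp (u$i) * c) * h$j)) (at u)"
  unfolding len_sq_def power2_eq_square
  by (rule has_derivative_eq_rhs,
      (rule has_derivative_add has_derivative_mult has_derivative_const has_derivative_exp_nth)+)
    (simp add: fun_eq_iff algebra_simps)

lemma law_of_cosines_derivative_eq:
  fixes x y z a b c hx hy hz S :: real
  defines "A \<equiv> len_sq x y c" and "B \<equiv> len_sq x z b" and "C \<equiv> len_sq y z a"
    and "dA \<equiv> 2*x*(x + y*c)*hx + 2*y*(y + x*c)*hy"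
    and "dB \<equiv> 2*x*(x + z*b)*hx + 2*z*(z + x*b)*hz"
    and "dC \<equiv> 2*y*(y + z*a)*hy + 2*z*(z + y*a)*hz"
    and "P \<equiv> x*y*(x*y*(1-c\<^sup>2) + z*(x*(a+b*c) + y*(b+a*c)))"
    and "Q \<equiv> x*z*(x*z*(1-b\<^sup>2) + y*(x*(a+c*b) + z*(c+a*b)))"
  assumes "A \<noteq> 0" "B \<noteq> 0" "S \<noteq> 0"
  shows "- (dA + dB - dC - (A + B - C)/2 * (dA/A + dB/B)) / (2*S) = P/(A*S) * (hy - hx) + Q/(B*S) * (hz - hx)"
proof -
  have "(A + B - C) * (B*dA + A*dB) - 2*A*B*(dA + dB - dC) = 4 * (P*B*(hy - hx) + Q*A*(hz - hx))"
    unfolding A_def B_def C_def dA_def dB_def dC_def P_def Q_def len_sq_def by algebra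
  moreover have "- (dA + dB - dC - (A + B - C)/2 * (dA/A + dB/B)) / (2*S) =
      ((A + B - C) * (B*dA + A*dB) - 2*A*B*(dA + dB - dC)) / (4*A*B*S)"
    using assms(9-11) by (simp add: field_simps)
  moreover have "P/(A*S) * (hy - hx) + Q/(B*S) * (hz - hx) = 4 * (P*B*(hy - hx) + Q*A*(hz - hx)) / (4*A*B*S)"
    using assms(9-11) by (simp add: field_simps)
  ultimately show ?thesis by simp
qed

lemma has_derivative_tri_angle_exp:
  fixes u :: "real^'n" and i j k :: 'n
  defines "x \<equiv> exp (u$i)" and "y \<equiv> exp (u$j)" and "z \<equiv> exp (u$k)"
  assumes adm: "admissible_cosines a b c"
  shows "((\<lambda>w. tri_angle (exp (w$i)) (exp (w$j)) (exp (w$k)) a b c) has_derivative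
          (\<lambda>h. angle_weight x y z a b c * (h$j - h$i) + angle_weight x z y a c b * (h$k - h$i))) (at u)"
proof -
  have pos: "0 < x" "0 < y" "0 < z"
    unfolding x_def y_def z_def by simp_all
  have lens: "0 < len_sq x y c" "0 < len_sq x z b"
    using pos adm len_sq_pos unfolding admissible_cosines_def by simp_all
  have area: "0 < four_area_sq x y z a b c"
    using four_area_sq_pos[OF pos adm] .
  then have disc: "0 < 4 * len_sq x y c * len_sq x z b - (len_sq x y c + len_sq x z b - len_sq y z a)\<^sup>2"
    unfolding four_area_sq_eq by simp
  have nonzero: "len_sq x y c \<noteq> 0" "len_sq x z b \<noteq> 0" "sqrt (four_area_sq x y z a b c) \<noteq> 0"
    using lens area by simp_all
  have sqrt_disc: "sqrt (4 * four_area_sq x y z a b c) = 2 * sqrt (four_area_sq x y z a b c)"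
    by (simp add: real_sqrt_mult)
  note deriv = has_derivative_arccos_law_of_cosines[OF
      has_derivative_len_sq_exp[of i j c u] has_derivative_len_sq_exp[of i k b u]
      has_derivative_len_sq_exp[of j k a u], folded x_def y_def z_def, OF lens disc]
  show ?thesis
    unfolding tri_angle_def
    by (rule has_derivative_eq_rhs[OF deriv], rule ext,
        unfold four_area_sq_eq sqrt_disc law_of_cosines_derivative_eq[OF nonzero])
      (simp add: angle_weight_def four_area_sq_swap)
qed

lemma nxt_less_3: "c < 3 \<Longrightarrow> nxt c < 3"
  unfolding nxt_def by simp

lemma nxt_nxt_nxt: "c < 3 \<Longrightarrow> nxt (nxt (nxt c)) = c"
  unfolding nxt_def by (cases c; cases "c - 1"; auto)

lemma nxt_simps [simp]: "nxt 0 = 1" "nxt 1 = 2" "nxt (Suc 0) = 2" "nxt 2 = 0"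
  unfolding nxt_def by simp_all

lemma triangulation_constant_on_faces:
  fixes F :: "'f set" and vert :: "'f \<Rightarrow> nat \<Rightarrow> 'v" and edge :: "'f \<Rightarrow> nat \<Rightarrow> 'e"
  assumes tri: "triangulation F vert edge"
    and face_const: "\<forall>f\<in>F. \<forall>c<3. g (vert f c) = g (vert f 0)"
  shows "g v = g w"
proof -
  have adjacent: "g (vert f 0) = g (vert f' 0)" if adj: "(f, f') \<in> face_adj F edge" for f f'
  proof -
    obtain c d where cd: "f \<in> F" "f' \<in> F" "c < 3" "d < 3" "edge f c = edge f' d"
      using adj unfolding face_adj_def by blast
    show ?thesis
    proof (cases "(f, c) = (f', d)")
      case False
      then have "vert f c = vert f' (nxt d)"
        using tri cd unfolding triangulation_def by blast
      then show ?thesis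
        using face_const cd nxt_less_3[OF cd(4)] by metis
    qed simp
  qed
  have connected: "g (vert f 0) = g (vert f' 0)" if "(f, f') \<in> (face_adj F edge)\<^sup>*" for f f'
    using that by (induction rule: rtrancl_induct) (simp_all add: adjacent)
  have "g v = g (vert f0 0)" if "f0 \<in> F" for v f0
  proof -
    obtain f c where "f \<in> F" "c < 3" "vert f c = v"
      using tri unfolding triangulation_def by blast
    moreover have "(f, f0) \<in> (face_adj F edge)\<^sup>*"
      using tri \<open>f \<in> F\<close> \<open>f0 \<in> F\<close> unfolding triangulation_def by blast
    ultimately show ?thesis
      using face_const connected by metis
  qed
  moreover obtain f0 where "f0 \<in> F"
    using tri unfolding triangulation_def by blast
  ultimately show ?thesis
    by metis
qed

locale circle_pattern =
  fixes F :: "'f set" and vert :: "'f \<Rightarrow> nat \<Rightarrow> 'v::finite" and edge :: "'f \<Rightarrow> nat \<Rightarrow> 'e"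
    and \<Theta> :: "'e \<Rightarrow> real"
  assumes finite_faces: "finite F"
    and angle_range: "\<forall>e\<in>edge_set F edge. 0 \<le> \<Theta> e \<and> \<Theta> e < pi"
    and C1: "C1 F edge \<Theta>"
begin

definition cosine :: "'f \<Rightarrow> nat \<Rightarrow> real" where
  "cosine f s = cos (\<Theta> (edge f s))"

definition side_weight :: "real^'v \<Rightarrow> 'f \<Rightarrow> nat \<Rightarrow> real" where
  "side_weight u f s =
     angle_weight (exp (u $ vert f s)) (exp (u $ vert f (nxt s))) (exp (u $ vert f (nxt (nxt s))))
       (cosine f (nxt s)) (cosine f (nxt (nxt s))) (cosine f s)"

definition corner_angle_deriv :: "real^'v \<Rightarrow> 'f \<Rightarrow> nat \<Rightarrow> real^'v \<Rightarrow> real" where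
  "corner_angle_deriv u f c h =
     side_weight u f c * (h $ vert f (nxt c) - h $ vert f c)
     + side_weight u f (nxt (nxt c)) * (h $ vert f (nxt (nxt c)) - h $ vert f c)"

definition curvature_deriv :: "real^'v \<Rightarrow> real^'v \<Rightarrow> real^'v" where
  "curvature_deriv u h = (\<chi> v. - (\<Sum>(f, c)\<in>corners_at F vert v. corner_angle_deriv u f c h))"

definition dirichlet_form :: "real^'v \<Rightarrow> real^'v \<Rightarrow> real^'v \<Rightarrow> real" where
  "dirichlet_form u x y =
     (\<Sum>f\<in>F. \<Sum>s<3. side_weight u f s * (x $ vert f s - x $ vert f (nxt s)) * (y $ vert f s - y $ vert f (nxt s)))"

lemma cosine_bounds:
  assumes "f \<in> F" "s < 3"
  shows "-1 < cosine f s" "cosine f s \<le> 1"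
proof -
  have "edge f s \<in> edge_set F edge"
    unfolding edge_set_def using assms by blast
  then have "0 \<le> \<Theta> (edge f s)" "\<Theta> (edge f s) < pi"
    using angle_range by auto
  then have "cos pi < cos (\<Theta> (edge f s))"
    by (intro cos_monotone_0_pi) auto
  then show "-1 < cosine f s"
    unfolding cosine_def by simp
  show "cosine f s \<le> 1"
    unfolding cosine_def by simp
qed

lemma admissible_cosines_face:
  assumes "f \<in> F" "c < 3"
  shows "admissible_cosines (cosine f (nxt c)) (cosine f (nxt (nxt c))) (cosine f c)"
proof -
  have corners: "nxt c < 3" "nxt (nxt c) < 3"
    using assms nxt_less_3 by auto
  have "cosine f s + cosine f (nxt s) * cosine f (nxt (nxt s)) \<ge> 0" if "s < 3" for s
    using C1 assms(1) that unfolding C1_def cosine_def by auto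
  from this[of c] this[of "nxt c"] this[of "nxt (nxt c)"] show ?thesis
    using assms(2) corners cosine_bounds[OF assms] cosine_bounds[OF assms(1) corners(1)] cosine_bounds[OF assms(1) corners(2)]
    unfolding admissible_cosines_def nxt_nxt_nxt[OF assms(2)] nxt_nxt_nxt[OF corners(1)] corners
    by (simp add: mult.commute)
qed

lemma corner_angle_exp_eq:
  assumes "c < 3"
  shows "corner_angle vert edge \<Theta> (\<lambda>v. exp (u $ v)) f c =
    tri_angle (exp (u $ vert f c)) (exp (u $ vert f (nxt c))) (exp (u $ vert f (nxt (nxt c))))
      (cosine f (nxt c)) (cosine f (nxt (nxt c))) (cosine f c)"
proof -
  have "edge_len \<Theta> r p q e = sqrt (len_sq (r p) (r q) (cos (\<Theta> e)))" for r :: "'v \<Rightarrow> real" and p q e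
    unfolding edge_len_def len_sq_def ..
  moreover have "(sqrt (len_sq x y (cos t)))\<^sup>2 = len_sq x y (cos t)" for x y t
    using len_sq_nonneg[of "cos t" x y] by simp
  ultimately show ?thesis
    unfolding corner_angle_def side_len_def Let_def tri_angle_def nxt_nxt_nxt[OF assms] cosine_def
    by (simp add: len_sq_commute[of "exp (u $ vert f (nxt (nxt c)))"])
qed

lemma has_derivative_corner_angle:
  assumes "f \<in> F" "c < 3"
  shows "((\<lambda>u. corner_angle vert edge \<Theta> (\<lambda>v. exp (u $ v)) f c) has_derivative corner_angle_deriv u f c) (at u)"
proof -
  note deriv = has_derivative_tri_angle_exp[OF admissible_cosines_face[OF assms],
      where u=u and i="vert f c" and j="vert f (nxt c)" and k="vert f (nxt (nxt c))"]
  show ?thesis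
    unfolding corner_angle_exp_eq[OF assms(2)]
    by (rule has_derivative_eq_rhs[OF deriv])
      (simp add: fun_eq_iff corner_angle_deriv_def side_weight_def nxt_nxt_nxt[OF assms(2)]
        angle_weight_swap[of "exp (u $ vert f c)" "exp (u $ vert f (nxt (nxt c)))"])
qed

lemma has_derivative_curv_map: "(curv_map F vert edge \<Theta> has_derivative curvature_deriv u) (at u)"
  unfolding curv_map_def curvature_deriv_def
proof (rule has_derivative_vec_lambda)
  fix v
  have "corners_at F vert v \<subseteq> F \<times> {..<3}"
    unfolding corners_at_def by auto
  then have "finite (corners_at F vert v)"
    using finite_faces finite_subset by blast
  have "((\<lambda>u. cone_angle F vert edge \<Theta> (\<lambda>w. exp (u $ w)) v) has_derivative
         (\<lambda>h. \<Sum>(f, c)\<in>corners_at F vert v. corner_angle_deriv u f c h)) (at u)"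
    unfolding cone_angle_def
    by (rule has_derivative_sum) (auto simp: corners_at_def intro: has_derivative_corner_angle)
  then show "((\<lambda>u. curvature F vert edge \<Theta> (\<lambda>w. exp (u $ w)) v) has_derivative
         (\<lambda>h. - (\<Sum>(f, c)\<in>corners_at F vert v. corner_angle_deriv u f c h))) (at u)"
    unfolding curvature_def by (rule has_derivative_diff[OF has_derivative_const, simplified])
qed

lemma face_sum_corner_angle_deriv:
  "(\<Sum>c<3. y $ vert f c * corner_angle_deriv u f c x) =
   - (\<Sum>s<3. side_weight u f s * (x $ vert f s - x $ vert f (nxt s)) * (y $ vert f s - y $ vert f (nxt s)))"
proof -
  have "{..<3::nat} = {0, 1, 2}"
    by auto
  then show ?thesis
    unfolding corner_angle_deriv_def by (simp add: algebra_simps)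
qed

lemma inner_curvature_deriv: "y \<bullet> curvature_deriv u x = dirichlet_form u x y"
proof -
  define corner_term where "corner_term = (\<lambda>(f, c). y $ vert f c * corner_angle_deriv u f c x)"
  have finite_corners: "finite (F \<times> {..<3::nat})"
    using finite_faces by simp
  have "y \<bullet> curvature_deriv u x =
      - (\<Sum>v\<in>UNIV. \<Sum>(f, c)\<in>corners_at F vert v. y $ v * corner_angle_deriv u f c x)"
    unfolding inner_vec_def curvature_deriv_def
    by (simp add: sum_distrib_left sum_negf split_def)
  also have "\<dots> = - (\<Sum>p\<in>F \<times> {..<3}. corner_term p)"
    unfolding corners_at_def corner_term_def
    by (subst sum.group[OF finite_corners, where g="\<lambda>(f, c). vert f c", symmetric])
      (auto intro!: sum.cong)
  also have "\<dots> = dirichlet_form u x y"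
    unfolding sum.cartesian_product[symmetric] corner_term_def dirichlet_form_def
    by (simp add: face_sum_corner_angle_deriv sum_negf)
  finally show ?thesis .
qed

lemma dirichlet_form_commute: "dirichlet_form u x y = dirichlet_form u y x"
  unfolding dirichlet_form_def by (simp add: algebra_simps)

lemma side_weight_nonneg: "f \<in> F \<Longrightarrow> s < 3 \<Longrightarrow> 0 \<le> side_weight u f s"
  unfolding side_weight_def by (intro angle_weight_nonneg admissible_cosines_face exp_gt_zero)

lemma dirichlet_form_nonneg: "0 \<le> dirichlet_form u x x"
  unfolding dirichlet_form_def
  by (intro sum_nonneg) (simp add: side_weight_nonneg mult.assoc)

lemma side_weight_pos:
  assumes "f \<in> F" "s < 3" "cosine f s < 1 \<or> 0 < cosine f (nxt s) + cosine f (nxt (nxt s)) * cosine f s"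
  shows "0 < side_weight u f s"
  unfolding side_weight_def
  using assms by (intro angle_weight_pos admissible_cosines_face exp_gt_zero)

lemma side_weight_not_pos_imp:
  assumes "f \<in> F" "s < 3" and "\<not> 0 < side_weight u f s"
  shows "cosine f s = 1" "cosine f (nxt s) + cosine f (nxt (nxt s)) = 0"
  using side_weight_pos[OF assms(1,2)] assms(3) admissible_cosines_face[OF assms(1,2)]
  unfolding admissible_cosines_def by force+

lemma side_weight_pos_one_of_two:
  assumes "f \<in> F" "s < 3" "t < 3" "s \<noteq> t"
  shows "0 < side_weight u f s \<or> 0 < side_weight u f t"
proof (rule ccontr)
  assume "\<not> ?thesis"
  then have "cosine f s = 1" "cosine f (nxt s) + cosine f (nxt (nxt s)) = 0"
      "cosine f t = 1" "cosine f (nxt t) + cosine f (nxt (nxt t)) = 0"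
    using side_weight_not_pos_imp assms by blast+
  moreover have "-1 < cosine f 0" "-1 < cosine f 1" "-1 < cosine f 2"
    using cosine_bounds[OF assms(1)] by simp_all
  moreover have "s \<in> {0, 1, 2}" "t \<in> {0, 1, 2}"
    using assms(2,3) by auto
  ultimately show False
    using assms(4) by auto
qed

lemma dirichlet_form_eq_0_imp_face_constant:
  assumes zero: "dirichlet_form u x x = 0" and f: "f \<in> F" and "c < 3"
  shows "x $ vert f c = x $ vert f 0"
proof -
  define energy where "energy g s =
    side_weight u g s * (x $ vert g s - x $ vert g (nxt s)) * (x $ vert g s - x $ vert g (nxt s))" for g s
  have nonneg: "0 \<le> energy g s" if "g \<in> F" "s < 3" for g s
    using that side_weight_nonneg unfolding energy_def by (simp add: mult.assoc)
  have "(\<Sum>g\<in>F. \<Sum>s<3. energy g s) = 0"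
    using zero unfolding dirichlet_form_def energy_def .
  then have "(\<Sum>s<3. energy f s) = 0"
    using f by (subst (asm) sum_nonneg_eq_0_iff) (auto intro: finite_faces sum_nonneg nonneg)
  then have energy_zero: "energy f s = 0" if "s < 3" for s
    using that by (subst (asm) sum_nonneg_eq_0_iff) (auto intro: f nonneg)
  have side_eq: "x $ vert f s = x $ vert f (nxt s)" if "s < 3" "0 < side_weight u f s" for s
    using energy_zero[OF that(1)] that(2) unfolding energy_def by simp
  have "x $ vert f 0 = x $ vert f 1" "x $ vert f 1 = x $ vert f 2"
    using side_weight_pos_one_of_two[where u=u, OF f, of 0 1] side_weight_pos_one_of_two[where u=u, OF f, of 1 2]
      side_weight_pos_one_of_two[where u=u, OF f, of 0 2] side_eq[of 0] side_eq[of 1] side_eq[of 2]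
    by auto
  moreover have "c \<in> {0, 1, 2}"
    using \<open>c < 3\<close> by auto
  ultimately show ?thesis
    by auto
qed

lemma dirichlet_form_pos:
  assumes tri: "triangulation F vert edge" and "x \<noteq> 0" and sum_zero: "(\<Sum>i\<in>UNIV. x $ i) = 0"
  shows "0 < dirichlet_form u x x"
proof (rule ccontr)
  assume "\<not> 0 < dirichlet_form u x x"
  then have "dirichlet_form u x x = 0"
    using dirichlet_form_nonneg[of u x] by simp
  then have const: "x $ v = x $ w" for v w
    using triangulation_constant_on_faces[OF tri] dirichlet_form_eq_0_imp_face_constant by blast
  have "real CARD('v) * x $ w = 0" for w
  proof -
    have "(\<Sum>i\<in>UNIV. x $ i) = (\<Sum>i\<in>(UNIV :: 'v set). x $ w)"
      by (rule sum.cong[OF refl]) (rule const)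
    with sum_zero show ?thesis
      by simp
  qed
  then have "x = 0"
    by (simp add: vec_eq_iff)
  with \<open>x \<noteq> 0\<close> show False ..
qed

end

theorem lemma3p1:
  fixes F :: "'f set" and vert :: "'f \<Rightarrow> nat \<Rightarrow> 'v::finite" and edge :: "'f \<Rightarrow> nat \<Rightarrow> 'e"
    and \<Theta> :: "'e \<Rightarrow> real" and u :: "real^'v"
  assumes "triangulation F vert edge"
    and "\<forall>e\<in>edge_set F edge. 0 \<le> \<Theta> e \<and> \<Theta> e < pi"
    and "C1 F edge \<Theta>"
  shows "curv_map F vert edge \<Theta> differentiable (at u) \<and>
         (let M = matrix (frechet_derivative (curv_map F vert edge \<Theta>) (at u)) in
            transpose M = M \<and>
            (\<forall>x. 0 \<le> x \<bullet> (M *v x)) \<and>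
            (\<forall>x. x \<noteq> 0 \<and> (\<Sum>i\<in>UNIV. x $ i) = 0 \<longrightarrow> 0 < x \<bullet> (M *v x)))"
proof -
  interpret circle_pattern F vert edge \<Theta>
    using assms unfolding triangulation_def by unfold_locales auto
  have deriv: "(curv_map F vert edge \<Theta> has_derivative curvature_deriv u) (at u)"
    by (rule has_derivative_curv_map)
  then have "linear (curvature_deriv u)"
    by (rule has_derivative_linear)
  then have quadratic: "x \<bullet> (matrix (curvature_deriv u) *v y) = dirichlet_form u y x" for x y
    by (simp add: matrix_works inner_curvature_deriv)
  have "adjoint (curvature_deriv u) = curvature_deriv u"
    by (intro adjoint_unique allI) (simp add: inner_commute inner_curvature_deriv dirichlet_form_commute)
  then have "transpose (matrix (curvature_deriv u)) = matrix (curvature_deriv u)"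
    using matrix_adjoint[OF \<open>linear (curvature_deriv u)\<close>] by simp
  then show ?thesis
    using deriv frechet_derivative_at[OF deriv] quadratic dirichlet_form_nonneg dirichlet_form_pos[OF assms(1)]
    by (auto simp: differentiable_def Let_def)
qed

end
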